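(* Let $V\in\Omega_n$ and suppose $0$ is an eigenvalue of $V$ of algebraic multiplicity $n_0\ge1$. Then there exist a neighborhood $\mathcal U$ of $\sigma(V)$ in $\mathbb G_n$ and a holomorphic map $\sigma^0=(\sigma^0_1,\dots,\sigma^0_{n_0}):\sigma^{-1}(\mathcal U)\to\mathbb C^{n_0}$ such that for every $M\in\sigma^{-1}(\mathcal U)$, $$X^{n_0}+\sum_{j=1}^{n_0}(-1)^j\sigma^0_j(M)X^{n_0-j}=(X-\lambda_1)\cdots(X-\lambda_{n_0}),$$ where $\lambda_1,\dots,\lambda_{n_0}$ are the $n_0$ eigenvalues of $M$ (counted with multiplicity) of smallest modulus.
   Context: $\mathcal M_n$ is the space of complex $n\times n$ matrices; $\rho$ is the spectral radius; $\Omega_n=\{A:\rho(A)<1\}$. Write $\det(tI-A)=t^n+\sum_{j=1}^n(-1)^j\sigma_j(A)t^{n-j}$, $\sigma=(\sigma_1,\dots,\sigma_n):\mathcal M_n\to\mathbb C^n$, and $\mathbb G_n=\sigma(\Omega_n)$. *)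

theory Defs
  imports "HOL-Analysis.Analysis" "HOL-Computational_Algebra.Polynomial"
begin

definition charpoly :: "complex ^ 'n ^ 'n \<Rightarrow> complex poly" where
  "charpoly A = det (\<chi> i j. (if i = j then [:0, 1:] else 0) - [: A $ i $ j :])"

definition spectral_radius :: "complex ^ 'n ^ 'n \<Rightarrow> real" where
  "spectral_radius A = Max (cmod ` {z. poly (charpoly A) z = 0})"

definition Omega :: "(complex ^ 'n ^ 'n) set" where
  "Omega = {A. spectral_radius A < 1}"

text \<open>sigma A j = sigma_j(A) for 1 \<le> j \<le> n (and 0 otherwise), so that
  det(tI-A) = t^n + sum_j (-1)^j sigma_j(A) t^(n-j).  Points of C^n are
  represented as functions nat \<Rightarrow> complex supported in {1..n}, with the product topology.\<close>
definition sigma :: "complex ^ 'n ^ 'n \<Rightarrow> nat \<Rightarrow> complex" where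
  "sigma A j = (if 1 \<le> j \<and> j \<le> CARD('n)
                then (-1) ^ j * coeff (charpoly A) (CARD('n) - j) else 0)"

definition Gn :: "('n::finite) itself \<Rightarrow> (nat \<Rightarrow> complex) set" where
  "Gn _ = sigma ` (Omega :: (complex ^ 'n ^ 'n) set)"

definition cscale :: "complex \<Rightarrow> complex ^ 'n ^ 'm \<Rightarrow> complex ^ 'n ^ 'm" where
  "cscale c A = (\<chi> i j. c * A $ i $ j)"

text \<open>Holomorphic function of several complex variables (the matrix entries):
  complex-Frechet differentiable at every point of S.\<close>
definition holomorphic_mat_on :: "(complex ^ 'n ^ 'm \<Rightarrow> complex) \<Rightarrow> (complex ^ 'n ^ 'm) set \<Rightarrow> bool" where
  "holomorphic_mat_on f S \<longleftrightarrow>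
     (\<forall>x\<in>S. \<exists>D. (f has_derivative D) (at x) \<and> (\<forall>c v. D (cscale c v) = c * D v))"

end

theory Submission
  imports Defs "HOL-Complex_Analysis.Complex_Analysis"
begin

text \<open>Choose \<open>r > 0\<close> so small that \<open>0\<close> is the only root of \<open>charpoly V\<close> in the closed disc of
  radius \<open>r\<close>. By Rouche's theorem, for \<open>M\<close> with \<open>sigma M\<close> close to \<open>sigma V\<close> the polynomial
  \<open>charpoly M\<close> still has no root on the circle and exactly \<open>n0\<close> roots inside it, and these are its
  \<open>n0\<close> roots of smallest modulus. By the argument principle their power sums are the contour
  integrals of \<open>z\<^sup>k p'(z) / p(z)\<close>, \<open>p = charpoly M\<close>, over the circle divided by \<open>2\<pi>i\<close>; these are
  holomorphic in the entries of \<open>M\<close> by differentiation under the integral sign, and Newton's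
  identities turn power sums into elementary symmetric functions.\<close>

section \<open>Holomorphic functions of a matrix\<close>

lemma holomorphic_mat_on_const: "holomorphic_mat_on (\<lambda>x. c) S"
  unfolding holomorphic_mat_on_def by (auto intro!: exI[of _ "\<lambda>v. 0"] derivative_eq_intros)

lemma holomorphic_mat_on_subset: "holomorphic_mat_on f S \<Longrightarrow> T \<subseteq> S \<Longrightarrow> holomorphic_mat_on f T"
  unfolding holomorphic_mat_on_def by blast

lemma holomorphic_mat_on_imp_continuous_on: "holomorphic_mat_on f S \<Longrightarrow> continuous_on S f"
  unfolding holomorphic_mat_on_def
  by (intro continuous_at_imp_continuous_on) (blast intro: has_derivative_continuous)

lemma holomorphic_mat_on_add:
  assumes "holomorphic_mat_on f S" "holomorphic_mat_on g S"
  shows "holomorphic_mat_on (\<lambda>x. f x + g x) S"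
  unfolding holomorphic_mat_on_def
proof
  fix x assume "x \<in> S"
  then obtain Df Dg where "(f has_derivative Df) (at x)" "\<forall>c v. Df (cscale c v) = c * Df v"
      "(g has_derivative Dg) (at x)" "\<forall>c v. Dg (cscale c v) = c * Dg v"
    using assms unfolding holomorphic_mat_on_def by blast
  then show "\<exists>D. ((\<lambda>x. f x + g x) has_derivative D) (at x) \<and> (\<forall>c v. D (cscale c v) = c * D v)"
    by (intro exI[of _ "\<lambda>v. Df v + Dg v"]) (auto intro!: derivative_eq_intros simp: algebra_simps)
qed

lemma holomorphic_mat_on_mult:
  assumes "holomorphic_mat_on f S" "holomorphic_mat_on g S"
  shows "holomorphic_mat_on (\<lambda>x. f x * g x) S"
  unfolding holomorphic_mat_on_def
proof
  fix x assume "x \<in> S"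
  then obtain Df Dg where "(f has_derivative Df) (at x)" "\<forall>c v. Df (cscale c v) = c * Df v"
      "(g has_derivative Dg) (at x)" "\<forall>c v. Dg (cscale c v) = c * Dg v"
    using assms unfolding holomorphic_mat_on_def by blast
  then show "\<exists>D. ((\<lambda>x. f x * g x) has_derivative D) (at x) \<and> (\<forall>c v. D (cscale c v) = c * D v)"
    by (intro exI[of _ "\<lambda>v. f x * Dg v + Df v * g x"]) (auto intro!: derivative_eq_intros simp: algebra_simps)
qed

lemma holomorphic_mat_on_sum:
  "finite A \<Longrightarrow> (\<And>i. i \<in> A \<Longrightarrow> holomorphic_mat_on (f i) S) \<Longrightarrow> holomorphic_mat_on (\<lambda>x. \<Sum>i\<in>A. f i x) S"
  by (induction A rule: finite_induct) (auto intro!: holomorphic_mat_on_add holomorphic_mat_on_const)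

section \<open>Holomorphic parameter integrals\<close>

text \<open>\<open>f x t\<close> is holomorphic in the matrix \<open>x\<close>, with a derivative that is continuous jointly in
  \<open>(x, t)\<close>: the hypothesis for differentiation under the integral sign.\<close>
definition holomorphic_param_on ::
    "((complex ^ 'n ^ 'm) \<times> real) set \<Rightarrow> (complex ^ 'n ^ 'm \<Rightarrow> real \<Rightarrow> complex) \<Rightarrow> bool" where
  "holomorphic_param_on S f \<longleftrightarrow> (\<exists>f'. continuous_on S (\<lambda>(x, t). f' x t) \<and> continuous_on S (\<lambda>(x, t). f x t) \<and>
     (\<forall>(x, t) \<in> S. ((\<lambda>y. f y t) has_derivative blinfun_apply (f' x t)) (at x) \<and>
        (\<forall>c v. f' x t (cscale c v) = c * f' x t v)))"

lemma holomorphic_param_on_subset: "holomorphic_param_on S f \<Longrightarrow> T \<subseteq> S \<Longrightarrow> holomorphic_param_on T f"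
  unfolding holomorphic_param_on_def by (meson continuous_on_subset subsetD)

lemma holomorphic_param_on_param: "continuous_on UNIV g \<Longrightarrow> holomorphic_param_on S (\<lambda>x t. g t)"
  unfolding holomorphic_param_on_def
  by (rule exI[of _ "\<lambda>x t. 0"])
    (auto intro!: continuous_intros continuous_on_compose2[of UNIV g] simp: case_prod_beta zero_blinfun.rep_eq)

lemma holomorphic_param_on_const: "holomorphic_param_on S (\<lambda>x t. c)"
  using holomorphic_param_on_param[of "\<lambda>t. c"] by simp

lemma holomorphic_param_on_entry: "holomorphic_param_on S (\<lambda>(x :: complex ^ 'n ^ 'm) t. x $ i $ j)"
proof -
  have lin: "bounded_linear (\<lambda>v :: complex ^ 'n ^ 'm. v $ i $ j)"
    by (intro bounded_linear_compose[OF bounded_linear_vec_nth] bounded_linear_vec_nth)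
  show ?thesis unfolding holomorphic_param_on_def
    by (rule exI[of _ "\<lambda>x t. Blinfun (\<lambda>v. v $ i $ j)"])
      (auto simp: bounded_linear_Blinfun_apply[OF lin] cscale_def case_prod_beta
        intro!: continuous_intros bounded_linear_imp_has_derivative lin)
qed

lemma holomorphic_param_on_add:
  assumes "holomorphic_param_on S f" "holomorphic_param_on S g"
  shows "holomorphic_param_on S (\<lambda>x t. f x t + g x t)"
  using assms unfolding holomorphic_param_on_def
  apply (elim exE conjE)
  subgoal for f' g'
    by (rule exI[of _ "\<lambda>x t. f' x t + g' x t"])
      (auto simp: case_prod_beta blinfun.add_left algebra_simps intro!: continuous_intros derivative_eq_intros)
  done

lemma holomorphic_param_on_mult:
  assumes "holomorphic_param_on S f" "holomorphic_param_on S g"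
  shows "holomorphic_param_on S (\<lambda>x t. f x t * g x t)"
  using assms unfolding holomorphic_param_on_def
  apply (elim exE conjE)
  subgoal for f' g'
    by (rule exI[of _ "\<lambda>x t. (blinfun_mult_right (f x t) o\<^sub>L g' x t) + (blinfun_mult_right (g x t) o\<^sub>L f' x t)"])
      (auto simp: case_prod_beta blinfun.add_left algebra_simps intro!: continuous_intros derivative_eq_intros)
  done

lemma holomorphic_param_on_inverse:
  assumes "holomorphic_param_on S f" "\<And>x t. (x, t) \<in> S \<Longrightarrow> f x t \<noteq> 0"
  shows "holomorphic_param_on S (\<lambda>x t. inverse (f x t))"
  using assms(1) unfolding holomorphic_param_on_def
  apply (elim exE conjE)
  subgoal for f'
    by (rule exI[of _ "\<lambda>x t. blinfun_mult_right (- (inverse (f x t) ^ 2)) o\<^sub>L f' x t"])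
      (auto simp: case_prod_beta algebra_simps power2_eq_square intro!: derivative_eq_intros continuous_intros assms(2))
  done

lemma holomorphic_param_on_neg: "holomorphic_param_on S f \<Longrightarrow> holomorphic_param_on S (\<lambda>x t. - f x t)"
  using holomorphic_param_on_mult[OF holomorphic_param_on_const[of S "-1"]] by simp

lemma holomorphic_param_on_diff:
  "holomorphic_param_on S f \<Longrightarrow> holomorphic_param_on S g \<Longrightarrow> holomorphic_param_on S (\<lambda>x t. f x t - g x t)"
  using holomorphic_param_on_add[OF _ holomorphic_param_on_neg] by simp

lemma holomorphic_param_on_divide:
  "holomorphic_param_on S f \<Longrightarrow> holomorphic_param_on S g \<Longrightarrow> (\<And>x t. (x, t) \<in> S \<Longrightarrow> g x t \<noteq> 0) \<Longrightarrow>
    holomorphic_param_on S (\<lambda>x t. f x t / g x t)"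
  unfolding divide_inverse by (intro holomorphic_param_on_mult holomorphic_param_on_inverse)

lemma holomorphic_param_on_power: "holomorphic_param_on S f \<Longrightarrow> holomorphic_param_on S (\<lambda>x t. f x t ^ k)"
  by (induction k) (auto intro!: holomorphic_param_on_mult holomorphic_param_on_const)

lemma holomorphic_param_on_sum:
  "finite A \<Longrightarrow> (\<And>i. i \<in> A \<Longrightarrow> holomorphic_param_on S (f i)) \<Longrightarrow> holomorphic_param_on S (\<lambda>x t. \<Sum>i\<in>A. f i x t)"
  by (induction A rule: finite_induct) (auto intro!: holomorphic_param_on_add holomorphic_param_on_const)

lemma holomorphic_param_on_imp_holomorphic_mat_on:
  "holomorphic_param_on (S \<times> T) f \<Longrightarrow> t \<in> T \<Longrightarrow> holomorphic_mat_on (\<lambda>x. f x t) S"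
  unfolding holomorphic_param_on_def holomorphic_mat_on_def by blast

lemma integrable_on_section:
  fixes g :: "'a::topological_space \<Rightarrow> 'b::euclidean_space \<Rightarrow> 'c::banach"
  assumes "continuous_on (S \<times> cbox a b) (\<lambda>(x, t). g x t)" "x \<in> S"
  shows "g x integrable_on cbox a b"
proof -
  have "continuous_on (cbox a b) (\<lambda>t. (\<lambda>(x, t). g x t) (x, t))"
    by (rule continuous_on_compose2[OF assms(1)]) (use assms(2) in \<open>auto intro!: continuous_intros\<close>)
  then show ?thesis by (simp add: integrable_continuous)
qed

lemma holomorphic_mat_on_integral:
  assumes "open W" and f: "holomorphic_param_on (W \<times> cbox a b) f"
  shows "holomorphic_mat_on (\<lambda>x. integral (cbox a b) (f x)) W"
  unfolding holomorphic_mat_on_def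
proof
  fix x0 assume "x0 \<in> W"
  then obtain e where e: "e > 0" "ball x0 e \<subseteq> W" using \<open>open W\<close> open_contains_ball by blast
  from f obtain f' where f': "continuous_on (W \<times> cbox a b) (\<lambda>(x, t). f' x t)"
      "continuous_on (W \<times> cbox a b) (\<lambda>(x, t). f x t)"
      "\<And>x t. (x, t) \<in> W \<times> cbox a b \<Longrightarrow> ((\<lambda>y. f y t) has_derivative blinfun_apply (f' x t)) (at x)"
      "\<And>x t c v. (x, t) \<in> W \<times> cbox a b \<Longrightarrow> f' x t (cscale c v) = c * f' x t v"
    unfolding holomorphic_param_on_def by fast
  have "((\<lambda>x. integral (cbox a b) (f x)) has_derivative integral (cbox a b) (f' x0)) (at x0 within ball x0 e)"
  proof (rule leibniz_rule)
    show "((\<lambda>x. f x t) has_derivative blinfun_apply (f' x t)) (at x within ball x0 e)"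
      if "x \<in> ball x0 e" "t \<in> cbox a b" for x t
    proof (rule has_derivative_at_withinI, rule f'(3))
      show "(x, t) \<in> W \<times> cbox a b" using that e(2) by auto
    qed
    show "f x integrable_on cbox a b" if "x \<in> ball x0 e" for x
      using that e(2) by (intro integrable_on_section[OF f'(2)]) auto
    show "continuous_on (ball x0 e \<times> cbox a b) (\<lambda>(x, t). f' x t)"
      using e(2) by (intro continuous_on_subset[OF f'(1)]) auto
  qed (use e(1) in auto)
  then have deriv: "((\<lambda>x. integral (cbox a b) (f x)) has_derivative integral (cbox a b) (f' x0)) (at x0)"
    using at_within_open[of x0 "ball x0 e"] e(1) by simp
  have "integral (cbox a b) (f' x0) (cscale c v) = c * integral (cbox a b) (f' x0) v" for c v
  proof -
    have "integral (cbox a b) (f' x0) (cscale c v) = integral (cbox a b) (\<lambda>t. f' x0 t (cscale c v))"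
      using integrable_on_section[OF f'(1) \<open>x0 \<in> W\<close>] by (simp add: blinfun_apply_integral)
    also have "\<dots> = integral (cbox a b) (\<lambda>t. c * f' x0 t v)"
      using \<open>x0 \<in> W\<close> f'(4) by (intro integral_cong) auto
    also have "\<dots> = c * integral (cbox a b) (f' x0) v"
      using integrable_on_section[OF f'(1) \<open>x0 \<in> W\<close>] by (simp add: blinfun_apply_integral)
    finally show ?thesis .
  qed
  with deriv show "\<exists>D. ((\<lambda>x. integral (cbox a b) (f x)) has_derivative D) (at x0) \<and> (\<forall>c v. D (cscale c v) = c * D v)"
    by blast
qed

section \<open>The characteristic polynomial\<close>

definition poly_coeffs_holomorphic :: "(complex ^ 'n ^ 'm \<Rightarrow> complex poly) \<Rightarrow> bool" where
  "poly_coeffs_holomorphic p \<longleftrightarrow> (\<forall>k. holomorphic_param_on UNIV (\<lambda>x t. coeff (p x) k))"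

lemma poly_coeffs_holomorphic_const: "poly_coeffs_holomorphic (\<lambda>x. c)"
  unfolding poly_coeffs_holomorphic_def by (auto intro: holomorphic_param_on_const)

lemma poly_coeffs_holomorphic_mult:
  "poly_coeffs_holomorphic p \<Longrightarrow> poly_coeffs_holomorphic q \<Longrightarrow> poly_coeffs_holomorphic (\<lambda>x. p x * q x)"
  unfolding poly_coeffs_holomorphic_def coeff_mult
  by (auto intro!: holomorphic_param_on_sum holomorphic_param_on_mult)

lemma poly_coeffs_holomorphic_sum:
  "finite A \<Longrightarrow> (\<And>i. i \<in> A \<Longrightarrow> poly_coeffs_holomorphic (f i)) \<Longrightarrow> poly_coeffs_holomorphic (\<lambda>x. \<Sum>i\<in>A. f i x)"
  by (induction A rule: finite_induct)
    (auto simp: poly_coeffs_holomorphic_def intro!: holomorphic_param_on_add holomorphic_param_on_const)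

lemma poly_coeffs_holomorphic_prod:
  "finite A \<Longrightarrow> (\<And>i. i \<in> A \<Longrightarrow> poly_coeffs_holomorphic (f i)) \<Longrightarrow> poly_coeffs_holomorphic (\<lambda>x. \<Prod>i\<in>A. f i x)"
  by (induction A rule: finite_induct) (auto intro!: poly_coeffs_holomorphic_mult poly_coeffs_holomorphic_const)

lemma poly_coeffs_holomorphic_minus_entry: "poly_coeffs_holomorphic (\<lambda>x. c - [: x $ i $ j :])"
  unfolding poly_coeffs_holomorphic_def
proof
  fix k
  show "holomorphic_param_on UNIV (\<lambda>x t. coeff (c - [:x $ i $ j:]) k)"
    by (cases k) (auto intro!: holomorphic_param_on_diff holomorphic_param_on_const holomorphic_param_on_entry)
qed

lemma poly_coeffs_holomorphic_charpoly: "poly_coeffs_holomorphic charpoly"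
  unfolding charpoly_def det_def
  by (auto intro!: poly_coeffs_holomorphic_sum poly_coeffs_holomorphic_mult poly_coeffs_holomorphic_const
      poly_coeffs_holomorphic_prod poly_coeffs_holomorphic_minus_entry)

lemma poly_eq_sum_upto:
  fixes p :: "'a::comm_semiring_1 poly"
  assumes "degree p \<le> N"
  shows "poly p z = (\<Sum>i\<le>N. coeff p i * z ^ i)"
proof -
  have "poly p z = (\<Sum>i\<le>degree p. coeff p i * z ^ i)" by (rule poly_altdef)
  also have "\<dots> = (\<Sum>i\<le>N. coeff p i * z ^ i)"
    by (rule sum.mono_neutral_left) (auto simp: assms coeff_eq_0)
  finally show ?thesis .
qed

lemma holomorphic_param_on_poly:
  assumes "poly_coeffs_holomorphic p" "\<And>x. degree (p x) \<le> N" "continuous_on UNIV g"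
  shows "holomorphic_param_on S (\<lambda>x t. poly (p x) (g t))"
proof -
  have "holomorphic_param_on S (\<lambda>x t. coeff (p x) i)" for i
    using assms(1) holomorphic_param_on_subset unfolding poly_coeffs_holomorphic_def by blast
  then show ?thesis
    unfolding poly_eq_sum_upto[OF assms(2)]
    by (intro holomorphic_param_on_sum holomorphic_param_on_mult holomorphic_param_on_power
        holomorphic_param_on_param assms(3) finite_atMost)
qed

lemma poly_coeffs_holomorphic_pderiv:
  "poly_coeffs_holomorphic p \<Longrightarrow> poly_coeffs_holomorphic (\<lambda>x. pderiv (p x))"
  unfolding poly_coeffs_holomorphic_def coeff_pderiv
  by (auto intro!: holomorphic_param_on_mult holomorphic_param_on_const)

lemma degree_det_term_le:
  fixes E :: "'a::comm_ring_1 poly ^ 'n ^ 'n"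
  assumes "\<And>i j. degree (E $ i $ j) \<le> (if i = j then 1 else 0)"
  shows "degree (\<Prod>i\<in>UNIV. E $ i $ p i) \<le> card {i. p i = i}"
proof -
  have "degree (\<Prod>i\<in>UNIV. E $ i $ p i) \<le> (\<Sum>i\<in>UNIV. degree (E $ i $ p i))"
    using degree_prod_sum_le[of UNIV "\<lambda>i. E $ i $ p i"] by (simp add: o_def)
  also have "\<dots> \<le> (\<Sum>i\<in>UNIV. if p i = i then 1 else 0)"
    using assms by (intro sum_mono) (simp add: eq_commute[of "p _"])
  also have "\<dots> = card {i. p i = i}"
    by (simp add: sum.If_cases)
  finally show ?thesis .
qed

text \<open>Only the diagonal term of the Leibniz expansion reaches the top degree.\<close>
lemma det_poly_matrix_monic:
  fixes E :: "'a::idom poly ^ 'n ^ 'n"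
  assumes deg: "\<And>i j. degree (E $ i $ j) \<le> (if i = j then 1 else 0)"
    and diag: "\<And>i. coeff (E $ i $ i) 1 = 1"
  shows "degree (det E) = CARD('n)" "coeff (det E) CARD('n) = 1"
proof -
  define T where "T p = of_int (sign p) * (\<Prod>i\<in>UNIV. E $ i $ p i)" for p
  define P where "P = {p. p permutes (UNIV :: 'n set)}"
  have det: "det E = T id + (\<Sum>p\<in>P - {id}. T p)"
    unfolding det_def T_def P_def by (subst sum.remove[of _ id]) (auto simp: permutes_id)
  have "degree (T p) < CARD('n)" if "p \<in> P - {id}" for p
  proof -
    from that obtain k where "p k \<noteq> k" by (metis DiffE eq_id_iff singletonI)
    then have "{i. p i = i} \<subset> UNIV" by auto
    then have "card {i. p i = i} < CARD('n)" by (simp add: psubset_card_mono)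
    moreover have "degree (T p) \<le> degree (\<Prod>i\<in>UNIV. E $ i $ p i)"
      unfolding T_def by (rule order.trans[OF degree_mult_le]) simp
    ultimately show ?thesis using degree_det_term_le[OF deg, of p] by linarith
  qed
  then have rest: "degree (\<Sum>p\<in>P - {id}. T p) < CARD('n)"
    by (intro degree_sum_less) auto
  have diag_deg: "degree (E $ i $ i) = 1" for i
    using deg[of i i] le_degree[of "E $ i $ i" 1] diag[of i] by simp
  then have "E $ i $ i \<noteq> 0" for i
    by (metis degree_0 zero_neq_one)
  with diag_deg have "degree (T id) = CARD('n)"
    by (simp add: T_def sign_id degree_prod_eq_sum_degree)
  moreover have "lead_coeff (T id) = 1"
    using diag diag_deg by (simp add: T_def sign_id lead_coeff_prod)
  ultimately show "degree (det E) = CARD('n)" "coeff (det E) CARD('n) = 1"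
    unfolding det using rest by (auto simp: degree_add_eq_left coeff_eq_0)
qed

lemma
  fixes A :: "complex ^ 'n ^ 'n"
  shows degree_charpoly: "degree (charpoly A) = CARD('n)"
    and coeff_charpoly_card: "coeff (charpoly A) CARD('n) = 1"
proof -
  have "degree ((\<chi> i j. (if i = j then [:0, 1:] else 0) - [: A $ i $ j :]) $ i $ j :: complex poly)
      \<le> (if i = j then 1 else 0)" for i j
    by (auto simp: degree_pCons_eq_if intro: order.trans[OF degree_diff_le])
  then show "degree (charpoly A) = CARD('n)" "coeff (charpoly A) CARD('n) = 1"
    unfolding charpoly_def by (auto intro: det_poly_matrix_monic)
qed

lemma charpoly_nonzero: "charpoly A \<noteq> 0"
  using coeff_charpoly_card[of A] by auto

lemma continuous_on_coeff_charpoly: "continuous_on UNIV (\<lambda>A :: complex ^ 'n ^ 'n. coeff (charpoly A) k)"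
  using poly_coeffs_holomorphic_charpoly unfolding poly_coeffs_holomorphic_def
  by (auto intro!: holomorphic_mat_on_imp_continuous_on holomorphic_param_on_imp_holomorphic_mat_on[where T=UNIV])

section \<open>Newton's identities\<close>

definition power_sum :: "'a::comm_semiring_1 multiset \<Rightarrow> nat \<Rightarrow> 'a" where
  "power_sum L k = (\<Sum>a\<in>#L. a ^ k)"

text \<open>Newton's identities \<open>j e\<^sub>j = - \<Sum>\<^sub>i\<^sub><\<^sub>j e\<^sub>i p\<^sub>j\<^sub>-\<^sub>i\<close>, solved for the coefficients \<open>e\<^sub>j\<close> of
  \<open>\<Prod>\<^sub>a (1 - a X)\<close> in terms of the power sums \<open>p\<close>.\<close>
fun newton_coeff :: "(nat \<Rightarrow> 'a::field_char_0) \<Rightarrow> nat \<Rightarrow> 'a" where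
  "newton_coeff p j = (if j = 0 then 1 else - (\<Sum>i<j. newton_coeff p i * p (j - i)) / of_nat j)"

declare newton_coeff.simps [simp del]

definition reversed_root_poly :: "'a::comm_ring_1 multiset \<Rightarrow> 'a poly" where
  "reversed_root_poly L = (\<Prod>a\<in>#L. [:1, - a:])"

definition power_sum_poly :: "nat \<Rightarrow> 'a::comm_ring_1 multiset \<Rightarrow> 'a poly" where
  "power_sum_poly N L = (\<Sum>k = 1..N. monom (power_sum L k) k)"

lemma power_sum_poly_add_mset:
  "power_sum_poly N (add_mset a L) = power_sum_poly N L + power_sum_poly N {#a#}"
  by (simp add: power_sum_poly_def power_sum_def sum.distrib add_monom[symmetric])

lemma linear_factor_times_power_sum_poly:
  fixes a :: "'a::comm_ring_1"
  shows "[:1, - a:] * power_sum_poly N {#a#} = monom a 1 - monom (a ^ Suc N) (Suc N)"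
proof (induction N)
  case 0
  then show ?case by (simp add: power_sum_poly_def)
next
  case (Suc N)
  have "power_sum_poly (Suc N) {#a#} = power_sum_poly N {#a#} + monom (a ^ Suc N) (Suc N)"
    by (simp add: power_sum_poly_def power_sum_def)
  moreover have "[:1, - a:] * monom c m = monom c m - monom (a * c) (Suc m)" for c m
    by (simp add: monom_Suc smult_monom minus_monom[symmetric])
  ultimately show ?case by (simp only: distrib_left Suc.IH) simp
qed

text \<open>The logarithmic derivative of \<open>R = \<Prod>\<^sub>a (1 - a X)\<close> is \<open>X R'/R = - \<Sum>\<^sub>k p\<^sub>k X\<^sup>k\<close>;
  here it is cleared of denominators and truncated at degree \<open>N\<close>.\<close>
lemma newton_identity_poly:
  fixes L :: "'a::idom multiset"
  assumes "j \<le> N"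
  shows "coeff (pCons 0 (pderiv (reversed_root_poly L)) + reversed_root_poly L * power_sum_poly N L) j = 0"
  using assms
proof (induction L arbitrary: j)
  case empty
  then show ?case by (simp add: reversed_root_poly_def power_sum_poly_def power_sum_def)
next
  case (add a L)
  define u where "u = [:1, - a:]"
  define R where "R = reversed_root_poly L"
  define T where "T = pCons 0 (pderiv R) + R * power_sum_poly N L"
  define X :: "'a poly" where "X = [:0, 1:]"
  have X: "pCons 0 p = X * p" for p by (simp add: X_def)
  have "pCons 0 (pderiv (u * R)) + u * R * (power_sum_poly N L + power_sum_poly N {#a#})
      - (u * T + R * (u * power_sum_poly N {#a#} - monom a 1)) = R * (X * pderiv u + monom a 1)"
    unfolding X T_def pderiv_mult by (simp add: algebra_simps)
  also have "X * pderiv u + monom a 1 = 0"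
    by (simp add: X_def u_def pderiv_pCons monom_Suc monom_0)
  finally have "pCons 0 (pderiv (u * R)) + u * R * (power_sum_poly N L + power_sum_poly N {#a#})
      = u * T + R * (u * power_sum_poly N {#a#} - monom a 1)"
    by simp
  also have "\<dots> = u * T - R * monom (a ^ Suc N) (Suc N)"
    unfolding u_def linear_factor_times_power_sum_poly by (simp add: algebra_simps)
  finally have eq: "pCons 0 (pderiv (reversed_root_poly (add_mset a L)))
      + reversed_root_poly (add_mset a L) * power_sum_poly N (add_mset a L)
      = u * T - R * monom (a ^ Suc N) (Suc N)"
    unfolding power_sum_poly_add_mset[of N a L] by (simp add: reversed_root_poly_def R_def u_def)
  have "coeff (u * T) j = coeff T j - a * (if j = 0 then 0 else coeff T (j - 1))"
    by (simp add: u_def coeff_pCons split: nat.split)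
  also have "\<dots> = 0" using add by (auto simp: T_def R_def)
  finally show ?case
    unfolding eq using add.prems by (simp add: mult.commute[of R] coeff_monom_mult)
qed

lemma newton_identity:
  fixes L :: "'a::idom multiset"
  assumes "j > 0"
  shows "of_nat j * coeff (reversed_root_poly L) j = - (\<Sum>i<j. coeff (reversed_root_poly L) i * power_sum L (j - i))"
proof -
  define R where "R = reversed_root_poly L"
  have "coeff (R * power_sum_poly j L) j = (\<Sum>i\<le>j. coeff R i * coeff (power_sum_poly j L) (j - i))"
    by (rule coeff_mult)
  also have "\<dots> = (\<Sum>i<j. coeff R i * power_sum L (j - i))"
    by (rule sum.mono_neutral_cong_right) (auto simp: power_sum_poly_def coeff_sum coeff_monom)
  finally have "coeff (R * power_sum_poly j L) j = (\<Sum>i<j. coeff R i * power_sum L (j - i))" .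
  moreover have "coeff (pCons 0 (pderiv R)) j = of_nat j * coeff R j"
    using assms by (cases j) (simp_all add: coeff_pderiv)
  ultimately show ?thesis
    using newton_identity_poly[of j j L] by (simp add: R_def eq_neg_iff_add_eq_0)
qed

lemma coeff_reversed_root_poly: "coeff (reversed_root_poly L) j = newton_coeff (power_sum L) j"
proof (induction j rule: less_induct)
  case (less j)
  show ?case
  proof (cases "j = 0")
    case True
    then show ?thesis
      by (induction L) (auto simp: reversed_root_poly_def coeff_mult_0 newton_coeff.simps)
  next
    case False
    then show ?thesis
      using newton_identity[of j L] less by (simp add: newton_coeff.simps[of _ j] field_simps)
  qed
qed

lemma linear_factors_nonzero: "(\<Prod>x\<in>#L. [:- x, 1:]) \<noteq> (0 :: 'a::idom poly)"
  by (auto simp: prod_mset_zero_iff)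

lemma degree_linear_factors: "degree (\<Prod>x\<in>#L. [:- x, 1:] :: 'a::idom poly) = size L"
  by (induction L) (simp_all del: mult_pCons_left add: degree_mult_eq[OF _ linear_factors_nonzero])

lemma reflect_poly_linear_factors:
  "reflect_poly (\<Prod>x\<in>#L. [:- x, 1:] :: 'a::idom poly) = reversed_root_poly L"
proof -
  have "reflect_poly [:- x, 1:] = [:1, - x:]" for x :: 'a
    by (simp add: reflect_poly_def)
  then show ?thesis
    by (induction L) (simp_all del: mult_pCons_left add: reflect_poly_mult reversed_root_poly_def)
qed

lemma coeff_linear_factors:
  fixes L :: "'a::field_char_0 multiset"
  assumes "k \<le> size L"
  shows "coeff (\<Prod>x\<in>#L. [:- x, 1:]) k = newton_coeff (power_sum L) (size L - k)"
  using assms coeff_reflect_poly[of "\<Prod>x\<in>#L. [:- x, 1:]" "size L - k"]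
  by (simp add: reflect_poly_linear_factors degree_linear_factors coeff_reversed_root_poly)

lemma linear_factors_eq_newton:
  fixes L :: "'a::field_char_0 multiset"
  shows "monom 1 (size L) + (\<Sum>j = 1..size L. smult (newton_coeff (power_sum L) j) (monom 1 (size L - j)))
    = (\<Prod>x\<in>#L. [:- x, 1:])"
proof -
  let ?P = "\<Prod>x\<in>#L. [:- x, 1:]" and ?e = "newton_coeff (power_sum L)" and ?m = "size L"
  have "?P = (\<Sum>k = 0..?m. monom (coeff ?P k) k)"
    using poly_as_sum_of_monoms'[of ?P ?m] by (simp add: degree_linear_factors atMost_atLeast0)
  also have "\<dots> = (\<Sum>k = 0..?m. monom (?e (?m - k)) k)"
    by (intro sum.cong) (auto simp: coeff_linear_factors)
  also have "\<dots> = (\<Sum>j = 0..?m. monom (?e j) (?m - j))"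
    by (subst sum.atLeastAtMost_rev) simp
  also have "\<dots> = monom 1 ?m + (\<Sum>j = 1..?m. monom (?e j) (?m - j))"
    by (simp add: sum.atLeast_Suc_atMost newton_coeff.simps)
  finally show ?thesis by (simp add: smult_monom)
qed

lemma holomorphic_mat_on_newton_coeff:
  assumes "\<And>k. holomorphic_mat_on (\<lambda>x. p x k) S"
  shows "holomorphic_mat_on (\<lambda>x. newton_coeff (p x) j) S"
proof (induction j rule: less_induct)
  case (less j)
  have "holomorphic_mat_on (\<lambda>x. - 1 / of_nat j * (\<Sum>i<j. newton_coeff (p x) i * p x (j - i))) S"
    by (intro holomorphic_mat_on_mult holomorphic_mat_on_const holomorphic_mat_on_sum finite_lessThan)
      (auto intro!: holomorphic_mat_on_mult less assms)
  moreover have "holomorphic_mat_on (\<lambda>x. newton_coeff (p x) 0) S"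
    by (simp add: newton_coeff.simps holomorphic_mat_on_const)
  ultimately show ?case
    by (cases "j = 0") (simp_all add: newton_coeff.simps[of _ j])
qed

section \<open>Roots in a disc\<close>

definition proots_in_disc :: "real \<Rightarrow> complex poly \<Rightarrow> complex multiset" where
  "proots_in_disc r P = filter_mset (\<lambda>a. cmod a < r) (proots P)"

lemma sum_mset_eq_sum_count:
  fixes f :: "'a \<Rightarrow> 'b::comm_semiring_1"
  assumes "finite A" "set_mset M \<subseteq> A"
  shows "(\<Sum>a\<in>#M. f a) = (\<Sum>x\<in>A. of_nat (count M x) * f x)"
  using assms(2)
proof (induction M)
  case empty
  then show ?case by simp
next
  case (add a M)
  have "(\<Sum>x\<in>A. of_nat (count (add_mset a M) x) * f x)
      = (\<Sum>x\<in>A. of_nat (count M x) * f x) + (\<Sum>x\<in>A. if x = a then f x else 0)"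
    by (simp add: sum.distrib[symmetric] algebra_simps, rule sum.cong) (auto simp: algebra_simps)
  also have "(\<Sum>x\<in>A. if x = a then f x else 0) = f a"
    using add.prems assms(1) by (simp add: sum.delta)
  finally show ?case using add by (simp add: add.commute)
qed

lemma winding_number_circlepath_0:
  assumes "r > 0" "cmod p \<noteq> r"
  shows "winding_number (circlepath 0 r) p = (if cmod p < r then 1 else 0)"
proof (cases "cmod p < r")
  case True
  then show ?thesis using winding_number_circlepath[of p 0 r] by simp
next
  case False
  have "winding_number (circlepath 0 r) p = 0"
  proof (rule winding_number_zero_outside[OF _ convex_cball[of 0 r]])
    show "p \<notin> cball 0 r" using False assms(2) by simp
    show "path_image (circlepath 0 r) \<subseteq> cball 0 r"
      using assms(1) by (simp add: path_image_circlepath_nonneg sphere_cball)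
  qed simp_all
  then show ?thesis using False by simp
qed

lemma zorder_poly:
  assumes "P \<noteq> 0"
  shows "zorder (poly P) a = int (order a P)"
proof -
  obtain q where q: "P = [:- a, 1:] ^ order a P * q" "\<not> [:- a, 1:] dvd q"
    using order_decomp[OF assms] by blast
  have "poly q a \<noteq> 0" using q(2) poly_eq_0_iff_dvd by blast
  then show ?thesis
    by (intro zorder_eqI[of UNIV a "poly q"])
      (auto intro!: holomorphic_intros simp: power_int_of_nat q(1)[THEN arg_cong[of _ _ poly]])
qed

lemma sum_roots_winding_zorder:
  fixes P :: "complex poly"
  assumes "P \<noteq> 0" "r > 0" "\<And>z. cmod z = r \<Longrightarrow> poly P z \<noteq> 0"
  shows "(\<Sum>p\<in>{z. poly P z = 0}. winding_number (circlepath 0 r) p * f p * of_int (zorder (poly P) p))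
       = (\<Sum>a\<in>#proots_in_disc r P. f a)"
proof -
  have fin: "finite {z. poly P z = 0}" using assms(1) poly_roots_finite by blast
  have "(\<Sum>a\<in>#proots_in_disc r P. f a) = (\<Sum>x\<in>{z. poly P z = 0}. of_nat (count (proots_in_disc r P) x) * f x)"
    by (rule sum_mset_eq_sum_count[OF fin]) (use assms(1) in \<open>auto simp: proots_in_disc_def\<close>)
  also have "\<dots> = (\<Sum>p\<in>{z. poly P z = 0}. winding_number (circlepath 0 r) p * f p * of_int (zorder (poly P) p))"
  proof (rule sum.cong[OF refl])
    fix p assume "p \<in> {z. poly P z = 0}"
    then have "cmod p \<noteq> r" using assms(3) by auto
    then show "of_nat (count (proots_in_disc r P) p) * f p
        = winding_number (circlepath 0 r) p * f p * of_int (zorder (poly P) p)"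
      using assms by (simp add: winding_number_circlepath_0 zorder_poly proots_in_disc_def)
  qed
  finally show ?thesis by simp
qed

definition root_moment :: "real \<Rightarrow> nat \<Rightarrow> complex poly \<Rightarrow> complex" where
  "root_moment r k P = contour_integral (circlepath 0 r) (\<lambda>z. deriv (poly P) z * z ^ k / poly P z)"

lemma root_moment_eq_power_sum:
  fixes P :: "complex poly"
  assumes "P \<noteq> 0" "r > 0" "\<And>z. cmod z = r \<Longrightarrow> poly P z \<noteq> 0"
  shows "root_moment r k P = 2 * pi * \<i> * power_sum (proots_in_disc r P) k"
proof -
  have roots: "{w \<in> UNIV. poly P w = 0 \<or> w \<in> {}} = {z. poly P z = 0}" by auto
  have "root_moment r k P
      = 2 * pi * \<i> * (\<Sum>p\<in>{z. poly P z = 0}. winding_number (circlepath 0 r) p * p ^ k * zorder (poly P) p)"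
    unfolding root_moment_def roots[symmetric]
    using assms poly_roots_finite[OF assms(1)]
    by (intro argument_principle)
      (auto simp: path_image_circlepath_nonneg intro!: holomorphic_intros)
  then show ?thesis
    by (simp add: sum_roots_winding_zorder[OF assms] power_sum_def)
qed

lemma Rouche_size_proots_in_disc:
  fixes P Q :: "complex poly"
  assumes "Q \<noteq> 0" "r > 0"
    and less: "\<And>z. cmod z = r \<Longrightarrow> cmod (poly P z - poly Q z) < cmod (poly Q z)"
  shows "P \<noteq> 0" "\<And>z. cmod z = r \<Longrightarrow> poly P z \<noteq> 0"
    "size (proots_in_disc r P) = size (proots_in_disc r Q)"
proof -
  show nzP: "poly P z \<noteq> 0" if "cmod z = r" for z
    using less[OF that] by auto
  show P0: "P \<noteq> 0"
    using nzP[of "of_real r"] assms(2) by auto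
  have nzQ: "poly Q z \<noteq> 0" if "cmod z = r" for z
    using less[OF that] by auto
  have "(\<Sum>p\<in>{p \<in> UNIV. poly Q p + (poly P p - poly Q p) = 0}.
          winding_number (circlepath 0 r) p * zorder (\<lambda>p. poly Q p + (poly P p - poly Q p)) p)
      = (\<Sum>p\<in>{p \<in> UNIV. poly Q p = 0}. winding_number (circlepath 0 r) p * zorder (poly Q) p)"
    using assms(2) less poly_roots_finite[OF P0] poly_roots_finite[OF assms(1)]
    by (intro Rouche_theorem)
      (auto simp: path_image_circlepath_nonneg connected_UNIV intro!: holomorphic_intros)
  then have "(\<Sum>p\<in>{z. poly P z = 0}. winding_number (circlepath 0 r) p * 1 * of_int (zorder (poly P) p))
      = (\<Sum>p\<in>{z. poly Q z = 0}. winding_number (circlepath 0 r) p * 1 * of_int (zorder (poly Q) p))"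
    by simp
  then have "(of_nat (size (proots_in_disc r P)) :: complex) = of_nat (size (proots_in_disc r Q))"
    by (simp only: sum_roots_winding_zorder[OF P0 assms(2) nzP] sum_roots_winding_zorder[OF assms(1,2) nzQ])
      simp
  then show "size (proots_in_disc r P) = size (proots_in_disc r Q)"
    by (simp only: of_nat_eq_iff)
qed

text \<open>With \<open>\<delta> = min\<^sub>|\<^sub>z\<^sub>|\<^sub>=\<^sub>r |Q z| / \<Sum>\<^sub>i\<^sub>\<le>\<^sub>N r\<^sup>i\<close> we get \<open>|P z - Q z| < |Q z|\<close> on the circle,
  so Rouche's theorem applies.\<close>
lemma size_proots_in_disc_locally_constant:
  fixes Q :: "complex poly"
  assumes "r > 0" "\<And>z. cmod z = r \<Longrightarrow> poly Q z \<noteq> 0" "degree Q \<le> N"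
  obtains \<delta> where "\<delta> > 0"
    "\<And>P. degree P \<le> N \<Longrightarrow> (\<And>i. i \<le> N \<Longrightarrow> cmod (coeff P i - coeff Q i) < \<delta>) \<Longrightarrow>
      P \<noteq> 0 \<and> (\<forall>z. cmod z = r \<longrightarrow> poly P z \<noteq> 0) \<and> size (proots_in_disc r P) = size (proots_in_disc r Q)"
proof -
  have cont: "continuous_on (sphere 0 r) (\<lambda>z. cmod (poly Q z))"
    by (intro continuous_intros)
  obtain z0 where z0: "z0 \<in> sphere 0 r" "\<And>z. z \<in> sphere 0 r \<Longrightarrow> cmod (poly Q z0) \<le> cmod (poly Q z)"
    using continuous_attains_inf[OF compact_sphere _ cont] assms(1) by auto
  define m where "m = cmod (poly Q z0)"
  define S where "S = (\<Sum>i\<le>N. r ^ i)"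
  have "m > 0" using assms(2) z0(1) by (simp add: m_def)
  moreover have "S > 0" using assms(1) by (simp add: S_def sum_pos)
  ultimately have "m / S > 0" by simp
  moreover have bound: "cmod (poly P z - poly Q z) < cmod (poly Q z)"
    if P: "degree P \<le> N" "\<And>i. i \<le> N \<Longrightarrow> cmod (coeff P i - coeff Q i) < m / S" and z: "cmod z = r" for P z
  proof -
    have "poly P z - poly Q z = (\<Sum>i\<le>N. (coeff P i - coeff Q i) * z ^ i)"
      using P(1) assms(3)
      by (simp add: poly_eq_sum_upto[of _ N] sum_subtractf left_diff_distrib)
    then have "cmod (poly P z - poly Q z) \<le> (\<Sum>i\<le>N. cmod (coeff P i - coeff Q i) * r ^ i)"
      using z by (auto intro!: order.trans[OF norm_sum] simp: norm_mult norm_power)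
    also have "\<dots> < (\<Sum>i\<le>N. m / S * r ^ i)"
      using P(2) assms(1) by (intro sum_strict_mono mult_strict_right_mono) auto
    also have "\<dots> = m / S * S"
      by (simp only: S_def sum_distrib_left)
    also have "\<dots> = m"
      using \<open>S > 0\<close> by simp
    also have "\<dots> \<le> cmod (poly Q z)"
      using z0(2) z by (simp add: m_def)
    finally show ?thesis .
  qed
  moreover have "Q \<noteq> 0" using assms(1) assms(2)[of "of_real r"] by auto
  ultimately show ?thesis
    using Rouche_size_proots_in_disc[OF _ assms(1)] bound by (intro that[of "m / S"]) auto
qed

text \<open>If some \<open>x \<in># L\<close> lay outside the disc, then, by counting, a root inside the disc and hence of
  smaller modulus would be missing from \<open>L\<close>.\<close>
lemma smallest_proots_eq_proots_in_disc:
  fixes P :: "complex poly"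
  assumes "P \<noteq> 0" "\<And>z. cmod z = r \<Longrightarrow> poly P z \<noteq> 0"
    and L: "L \<subseteq># proots P" "size L = size (proots_in_disc r P)"
      "\<forall>x\<in>#L. \<forall>y\<in>#proots P - L. cmod x \<le> cmod y"
  shows "L = proots_in_disc r P"
proof -
  define L_in where "L_in = filter_mset (\<lambda>a. cmod a < r) L"
  have L_in_sub: "L_in \<subseteq># proots_in_disc r P"
    unfolding L_in_def proots_in_disc_def by (rule multiset_filter_mono[OF L(1)])
  have inside: "cmod x < r" if x: "x \<in># L" for x
  proof (rule ccontr)
    assume "\<not> cmod x < r"
    moreover have "cmod x \<noteq> r" using x L(1) assms by (auto dest: mset_subset_eqD)
    ultimately have xr: "cmod x > r" by simp
    then have "x \<notin># L_in" by (simp add: L_in_def)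
    then have "L_in \<noteq> L" using x by auto
    then have "L_in \<subset># L"
      using multiset_filter_subset[of _ L] by (simp add: L_in_def subset_mset.le_neq_trans)
    then have "size (proots_in_disc r P - L_in) > 0"
      using mset_subset_size[of L_in L] L(2) by (simp add: size_Diff_submset[OF L_in_sub])
    moreover have "proots_in_disc r P - L_in = filter_mset (\<lambda>a. cmod a < r) (proots P - L)"
      by (simp add: proots_in_disc_def L_in_def)
    ultimately have "filter_mset (\<lambda>a. cmod a < r) (proots P - L) \<noteq> {#}"
      by auto
    then obtain y where "y \<in># proots P - L" "cmod y < r"
      unfolding filter_mset_eq_mempty_iff by blast
    then show False using L(3) x xr by fastforce
  qed
  then have "L_in = L" by (simp add: L_in_def filter_mset_eq_conv)
  with L_in_sub L(2) show ?thesis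
    by (auto simp: subset_mset.le_less dest: mset_subset_size)
qed

section \<open>The smallest roots near a matrix\<close>

lemma holomorphic_mat_on_root_moment_charpoly:
  assumes "open W" "r > 0" "\<And>M z. M \<in> W \<Longrightarrow> cmod z = r \<Longrightarrow> poly (charpoly M) z \<noteq> 0"
  shows "holomorphic_mat_on (\<lambda>M :: complex ^ 'n ^ 'n. root_moment r k (charpoly M)) W"
proof -
  define \<gamma> where "\<gamma> t = complex_of_real r * exp (2 * of_real pi * \<i> * of_real t)" for t :: real
  have "continuous_on UNIV \<gamma>" unfolding \<gamma>_def by (intro continuous_intros)
  have "cmod (\<gamma> t) = r" for t
    using assms(2) by (simp add: \<gamma>_def norm_mult)
  have "deriv (poly P) = poly (pderiv P)" for P :: "complex poly"
    by (intro ext DERIV_imp_deriv poly_DERIV)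
  then have moment: "root_moment r k (charpoly M) = integral (cbox 0 1)
      (\<lambda>t. poly (pderiv (charpoly M)) (\<gamma> t) * \<gamma> t ^ k / poly (charpoly M) (\<gamma> t) * (2 * pi * \<i> * \<gamma> t))"
    for M :: "complex ^ 'n ^ 'n"
    unfolding root_moment_def contour_integral_integral vector_derivative_circlepath
    unfolding circlepath \<gamma>_def
    by (simp add: cbox_interval mult_ac)
  have "holomorphic_param_on (W \<times> cbox 0 1) (\<lambda>M t. poly (pderiv (charpoly M)) (\<gamma> t) * \<gamma> t ^ k
      / poly (charpoly M) (\<gamma> t) * (2 * pi * \<i> * \<gamma> t))"
    using assms(3) \<open>continuous_on UNIV \<gamma>\<close> \<open>\<And>t. cmod (\<gamma> t) = r\<close>
    by (intro holomorphic_param_on_mult holomorphic_param_on_divide holomorphic_param_on_poly[where N = "CARD('n)"]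
        poly_coeffs_holomorphic_pderiv poly_coeffs_holomorphic_charpoly holomorphic_param_on_power
        holomorphic_param_on_param holomorphic_param_on_const)
      (auto simp: degree_charpoly degree_pderiv continuous_on_mult_left)
  then show ?thesis
    unfolding moment by (rule holomorphic_mat_on_integral[OF assms(1)])
qed

lemma holomorphic_mat_on_newton_coeff_root_moments:
  assumes "open W" "r > 0" "\<And>M z. M \<in> W \<Longrightarrow> cmod z = r \<Longrightarrow> poly (charpoly M) z \<noteq> 0"
  shows "holomorphic_mat_on (\<lambda>M :: complex ^ 'n ^ 'n.
    newton_coeff (\<lambda>k. root_moment r k (charpoly M) / (2 * pi * \<i>)) j) W"
  unfolding divide_inverse
  by (intro holomorphic_mat_on_newton_coeff holomorphic_mat_on_mult holomorphic_mat_on_const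
      holomorphic_mat_on_root_moment_charpoly assms)

lemma smallest_roots_eq_newton_root_moments:
  fixes P :: "complex poly"
  assumes "P \<noteq> 0" "r > 0" "\<forall>z. cmod z = r \<longrightarrow> poly P z \<noteq> 0"
    and L: "L \<subseteq># proots P" "size L = size (proots_in_disc r P)"
      "\<forall>x\<in>#L. \<forall>y\<in>#proots P - L. cmod x \<le> cmod y"
  shows "monom 1 (size L) + (\<Sum>j = 1..size L.
      smult (newton_coeff (\<lambda>k. root_moment r k P / (2 * pi * \<i>)) j) (monom 1 (size L - j)))
    = (\<Prod>x\<in>#L. [:- x, 1:])"
proof -
  have "L = proots_in_disc r P"
    using assms by (intro smallest_proots_eq_proots_in_disc) auto
  moreover have "(\<lambda>k. root_moment r k P / (2 * pi * \<i>)) = power_sum (proots_in_disc r P)"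
    using assms(1-3) by (simp add: root_moment_eq_power_sum)
  ultimately show ?thesis
    using linear_factors_eq_newton[of L] by simp
qed

lemma proots_in_small_disc:
  fixes P :: "complex poly"
  assumes "P \<noteq> 0"
  obtains r where "r > 0" "\<forall>z. cmod z = r \<longrightarrow> poly P z \<noteq> 0"
    "proots_in_disc r P = replicate_mset (order 0 P) 0"
proof -
  define Z where "Z = {z. poly P z = 0 \<and> z \<noteq> 0}"
  have "finite Z"
    using poly_roots_finite[OF assms] unfolding Z_def by (rule finite_subset[rotated]) auto
  define r where "r = (if Z = {} then 1 else Min (cmod ` Z) / 2)"
  have "r > 0"
    using \<open>finite Z\<close> by (auto simp: r_def Z_def)
  have r_less: "r < cmod z" if "poly P z = 0" "z \<noteq> 0" for z
  proof -
    have "z \<in> Z" using that by (simp add: Z_def)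
    moreover have "0 < Min (cmod ` Z)"
      using \<open>finite Z\<close> \<open>z \<in> Z\<close> by (subst Min_gr_iff) (auto simp: Z_def)
    ultimately have "Min (cmod ` Z) \<le> cmod z" "0 < Min (cmod ` Z)"
      using \<open>finite Z\<close> by auto
    then show ?thesis using \<open>z \<in> Z\<close> by (auto simp: r_def)
  qed
  show ?thesis
  proof (rule that)
    show "\<forall>z. cmod z = r \<longrightarrow> poly P z \<noteq> 0"
      using r_less \<open>r > 0\<close> by (metis less_irrefl norm_zero)
    have "proots_in_disc r P = filter_mset (\<lambda>a. a = 0) (proots P)"
      unfolding proots_in_disc_def using assms r_less \<open>r > 0\<close>
      by (intro filter_mset_cong) (auto, metis less_asym r_less)
    then show "proots_in_disc r P = replicate_mset (order 0 P) 0"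
      by (simp add: filter_eq_replicate_mset assms)
  qed fact
qed

definition polydisc :: "(nat \<Rightarrow> complex) \<Rightarrow> nat \<Rightarrow> real \<Rightarrow> (nat \<Rightarrow> complex) set" where
  "polydisc c n \<delta> = {x. \<forall>j\<in>{1..n}. cmod (x j - c j) < \<delta>}"

lemma open_Collect_finite_ball:
  assumes "finite I" "\<And>i. i \<in> I \<Longrightarrow> open {x. P i x}"
  shows "open {x. \<forall>i\<in>I. P i x}"
proof -
  have "{x. \<forall>i\<in>I. P i x} = (\<Inter>i\<in>I. {x. P i x})" by auto
  then show ?thesis using assms by auto
qed

lemma open_polydisc: "open (polydisc c n \<delta>)"
  unfolding polydisc_def
  by (intro open_Collect_finite_ball open_Collect_less finite_atLeastAtMost
      continuous_intros continuous_on_product_coordinates)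

lemma sigma_in_polydisc_iff:
  fixes M V :: "complex ^ 'n ^ 'n"
  shows "sigma M \<in> polydisc (sigma V) CARD('n) \<delta>
    \<longleftrightarrow> (\<forall>i\<in>{..<CARD('n)}. cmod (coeff (charpoly M) i - coeff (charpoly V) i) < \<delta>)"
proof -
  define n where "n = CARD('n)"
  have dist: "cmod (sigma M j - sigma V j) = cmod (coeff (charpoly M) (n - j) - coeff (charpoly V) (n - j))"
    if "j \<in> {1..n}" for j
    using that by (simp add: sigma_def n_def right_diff_distrib[symmetric] norm_mult norm_power)
  show ?thesis
    unfolding n_def[symmetric] polydisc_def mem_Collect_eq
  proof
    assume close: "\<forall>j\<in>{1..n}. cmod (sigma M j - sigma V j) < \<delta>"
    show "\<forall>i\<in>{..<n}. cmod (coeff (charpoly M) i - coeff (charpoly V) i) < \<delta>"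
    proof
      fix i assume "i \<in> {..<n}"
      then have j: "n - i \<in> {1..n}" and "n - (n - i) = i" by auto
      then show "cmod (coeff (charpoly M) i - coeff (charpoly V) i) < \<delta>"
        using bspec[OF close j] dist[OF j] \<open>n - (n - i) = i\<close> by simp
    qed
  next
    assume "\<forall>i\<in>{..<n}. cmod (coeff (charpoly M) i - coeff (charpoly V) i) < \<delta>"
    then show "\<forall>j\<in>{1..n}. cmod (sigma M j - sigma V j) < \<delta>"
      using dist by auto
  qed
qed

lemma open_vimage_sigma_polydisc:
  fixes V :: "complex ^ 'n ^ 'n"
  shows "open ((sigma :: complex ^ 'n ^ 'n \<Rightarrow> _) -` polydisc (sigma V) CARD('n) \<delta>)"
  unfolding vimage_def sigma_in_polydisc_iff
  by (intro open_Collect_finite_ball open_Collect_less finite_lessThan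
      continuous_intros continuous_on_coeff_charpoly)

lemma charpoly_proots_in_disc_near:
  fixes V :: "complex ^ 'n ^ 'n"
  obtains r \<delta> where "r > 0" "\<delta> > 0"
    "\<And>M :: complex ^ 'n ^ 'n. sigma M \<in> polydisc (sigma V) CARD('n) \<delta> \<Longrightarrow> (\<forall>z. cmod z = r \<longrightarrow> poly (charpoly M) z \<noteq> 0)
      \<and> size (proots_in_disc r (charpoly M)) = order 0 (charpoly V)"
proof -
  obtain r where r: "r > 0" "\<forall>z. cmod z = r \<longrightarrow> poly (charpoly V) z \<noteq> 0"
      "proots_in_disc r (charpoly V) = replicate_mset (order 0 (charpoly V)) 0"
    using proots_in_small_disc[OF charpoly_nonzero] by blast
  obtain \<delta> where "\<delta> > 0" and \<delta>: "\<And>P. degree P \<le> CARD('n) \<Longrightarrow>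
      (\<And>i. i \<le> CARD('n) \<Longrightarrow> cmod (coeff P i - coeff (charpoly V) i) < \<delta>) \<Longrightarrow>
      P \<noteq> 0 \<and> (\<forall>z. cmod z = r \<longrightarrow> poly P z \<noteq> 0) \<and> size (proots_in_disc r P) = order 0 (charpoly V)"
    using size_proots_in_disc_locally_constant[OF r(1), of "charpoly V" "CARD('n)"] r(2,3)
    by (auto simp: degree_charpoly)
  show ?thesis
  proof (rule that[OF r(1) \<open>\<delta> > 0\<close>])
    fix M :: "complex ^ 'n ^ 'n"
    assume "sigma M \<in> polydisc (sigma V) CARD('n) \<delta>"
    then have "cmod (coeff (charpoly M) i - coeff (charpoly V) i) < \<delta>" if "i \<le> CARD('n)" for i
      using that \<open>\<delta> > 0\<close> by (cases "i = CARD('n)") (auto simp: sigma_in_polydisc_iff coeff_charpoly_card)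
    then show "(\<forall>z. cmod z = r \<longrightarrow> poly (charpoly M) z \<noteq> 0)
        \<and> size (proots_in_disc r (charpoly M)) = order 0 (charpoly V)"
      using \<delta>[of "charpoly M"] by (simp add: degree_charpoly)
  qed
qed

theorem lemma4p1:
  fixes V :: "complex ^ 'n ^ 'n" and n0 :: nat
  assumes "V \<in> Omega"
    and "n0 \<ge> 1"
    and "order 0 (charpoly V) = n0"
  shows "\<exists>U (s0 :: nat \<Rightarrow> complex ^ 'n ^ 'n \<Rightarrow> complex). openin (top_of_set (Gn TYPE('n))) U \<and> sigma V \<in> U \<and>
           (\<forall>j\<in>{1..n0}. holomorphic_mat_on (s0 j) ((sigma :: complex ^ 'n ^ 'n \<Rightarrow> _) -` U)) \<and>
           (\<forall>M :: complex ^ 'n ^ 'n \<in> sigma -` U. \<forall>L.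
              (L \<subseteq># proots (charpoly M) \<and> size L = n0 \<and>
               (\<forall>x\<in>#L. \<forall>y\<in>#proots (charpoly M) - L. cmod x \<le> cmod y))
              \<longrightarrow> monom 1 n0 + (\<Sum>j = 1..n0. smult ((-1) ^ j * s0 j M) (monom 1 (n0 - j)))
                   = (\<Prod>x\<in>#L. [:- x, 1:]))"
proof -
  obtain r \<delta> where "r > 0" "\<delta> > 0" and near: "\<And>M :: complex ^ 'n ^ 'n. sigma M \<in> polydisc (sigma V) CARD('n) \<delta> \<Longrightarrow>
      (\<forall>z. cmod z = r \<longrightarrow> poly (charpoly M) z \<noteq> 0) \<and> size (proots_in_disc r (charpoly M)) = n0"
    using charpoly_proots_in_disc_near[of V] unfolding assms(3) by blast
  define D where "D = polydisc (sigma V) CARD('n) \<delta>"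
  define s0 where "s0 j M = (-1) ^ j * newton_coeff (\<lambda>k. root_moment r k (charpoly M) / (2 * pi * \<i>)) j"
    for j and M :: "complex ^ 'n ^ 'n"
  have sign: "(-1) ^ j * s0 j M = newton_coeff (\<lambda>k. root_moment r k (charpoly M) / (2 * pi * \<i>)) j" for j M
    by (simp add: s0_def flip: power_add mult_2)
  show ?thesis
  proof (intro exI[of _ "Gn TYPE('n) \<inter> D"] exI[of _ s0] conjI ballI allI impI)
    show "openin (top_of_set (Gn TYPE('n))) (Gn TYPE('n) \<inter> D)"
      using open_polydisc by (auto simp: D_def)
    show "sigma V \<in> Gn TYPE('n) \<inter> D"
      using assms(1) \<open>\<delta> > 0\<close> by (auto simp: Gn_def D_def polydisc_def)
    have "holomorphic_mat_on (s0 j) (sigma -` D)" for j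
      unfolding s0_def D_def using open_vimage_sigma_polydisc \<open>r > 0\<close> near
      by (intro holomorphic_mat_on_mult holomorphic_mat_on_const holomorphic_mat_on_newton_coeff_root_moments)
        auto
    then show "holomorphic_mat_on (s0 j) (sigma -` (Gn TYPE('n) \<inter> D))" for j
      by (rule holomorphic_mat_on_subset) auto
  next
    fix M :: "complex ^ 'n ^ 'n" and L
    assume "M \<in> sigma -` (Gn TYPE('n) \<inter> D)"
      and "L \<subseteq># proots (charpoly M) \<and> size L = n0 \<and> (\<forall>x\<in>#L. \<forall>y\<in>#proots (charpoly M) - L. cmod x \<le> cmod y)"
    with near[of M] \<open>r > 0\<close> show "monom 1 n0 + (\<Sum>j = 1..n0. smult ((-1) ^ j * s0 j M) (monom 1 (n0 - j)))
        = (\<Prod>x\<in>#L. [:- x, 1:])"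
      unfolding sign using smallest_roots_eq_newton_root_moments[OF charpoly_nonzero, of r M L]
      by (simp add: D_def)
  qed
qed

end
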